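(* Let $\mathcal G=(\mathcal V,\mathcal E,W)$ be a network, $h\in\mathbb{R}^{\mathcal V}$, and consider the SNC game with binary actions on $\mathcal G$ with external field $h$. Then: (i) the game is super-modular if and only if $\mathcal G$ is unsigned; (ii) if $\mathcal G$ is unsigned, then the set $\mathcal N$ of Nash equilibria is globally BR-reachable.
   Context: A network is a triple $\mathcal G=(\mathcal V,\mathcal E,W)$ where $\mathcal V$ is a finite nonempty set, $\mathcal E\subseteq\mathcal V\times\mathcal V$, and $W\in\mathbb{R}^{\mathcal V\times\mathcal V}$ has zero diagonal and satisfies $W_{ij}\neq0$ iff $(i,j)\in\mathcal E$ (weights may have either sign). It is unsigned if $W_{ij}\ge0$ for all $i,j$. The SNC game with binary actions on $\mathcal G$ with external field $h\in\mathbb{R}^{\mathcal V}$ has player set $\mathcal V$, action set $\{-1,+1\}$ for each player, strategy profiles $\mathcal X=\{\pm1\}^{\mathcal V}$, and utilities $u_i(x)=h_ix_i+x_i\sum_{j\in\mathcal V}W_{ij}x_j$. A game with binary actions $\{\pm1\}$ is super-modular if $u_i(+1,x_{-i})-u_i(-1,x_{-i})\le u_i(+1,y_{-i})-u_i(-1,y_{-i})$ for every player $i$ and all profiles $x\le y$ (entrywise). Best responses $\mathcal B_i(x_{-i})=\arg\max_{x_i\in\{\pm1\}}u_i(x_i,x_{-i})$; Nash equilibrium: $x^*_i\in\mathcal B_i(x^*_{-i})$ for all $i$. A BR-path of length $l\ge0$ from $x$ to $y$ is a sequence $x^{(0)}=x,\dots,x^{(l)}=y$ such that for each $k$ some player $i_k$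 has $x^{(k)}_{-i_k}=x^{(k-1)}_{-i_k}$ and $x^{(k)}_{i_k}\in\mathcal B_{i_k}(x^{(k-1)}_{-i_k})\setminus\{x^{(k-1)}_{i_k}\}$. A set $\mathcal X^*\subseteq\mathcal X$ is globally BR-reachable if from every profile there is a BR-path to some element of $\mathcal X^*$. *)

theory Defs
  imports "HOL-Analysis.Analysis"
begin

definition network :: "'v set \<Rightarrow> ('v \<times> 'v) set \<Rightarrow> ('v \<Rightarrow> 'v \<Rightarrow> real) \<Rightarrow> bool" where
  "network V E W \<longleftrightarrow> finite V \<and> V \<noteq> {} \<and> E \<subseteq> V \<times> V
     \<and> (\<forall>i j. i \<notin> V \<or> j \<notin> V \<longrightarrow> W i j = 0)
     \<and> (\<forall>i\<in>V. W i i = 0)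
     \<and> (\<forall>i\<in>V. \<forall>j\<in>V. W i j \<noteq> 0 \<longleftrightarrow> (i, j) \<in> E)"

definition unsigned :: "'v set \<Rightarrow> ('v \<Rightarrow> 'v \<Rightarrow> real) \<Rightarrow> bool" where
  "unsigned V W \<longleftrightarrow> (\<forall>i\<in>V. \<forall>j\<in>V. W i j \<ge> 0)"

definition profiles :: "'v set \<Rightarrow> ('v \<Rightarrow> real) set" where
  "profiles V = {x. (\<forall>i\<in>V. x i = -1 \<or> x i = 1) \<and> (\<forall>i. i \<notin> V \<longrightarrow> x i = 0)}"

definition util :: "'v set \<Rightarrow> ('v \<Rightarrow> 'v \<Rightarrow> real) \<Rightarrow> ('v \<Rightarrow> real) \<Rightarrow> 'v \<Rightarrow> ('v \<Rightarrow> real) \<Rightarrow> real" where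
  "util V W h i x = h i * x i + x i * (\<Sum>j\<in>V. W i j * x j)"

definition supermodular :: "'v set \<Rightarrow> ('v \<Rightarrow> 'v \<Rightarrow> real) \<Rightarrow> ('v \<Rightarrow> real) \<Rightarrow> bool" where
  "supermodular V W h \<longleftrightarrow>
     (\<forall>i\<in>V. \<forall>x\<in>profiles V. \<forall>y\<in>profiles V. (\<forall>k\<in>V. x k \<le> y k) \<longrightarrow>
        util V W h i (x(i := 1)) - util V W h i (x(i := -1))
          \<le> util V W h i (y(i := 1)) - util V W h i (y(i := -1)))"

definition best_resp :: "'v set \<Rightarrow> ('v \<Rightarrow> 'v \<Rightarrow> real) \<Rightarrow> ('v \<Rightarrow> real) \<Rightarrow> 'v \<Rightarrow> ('v \<Rightarrow> real) \<Rightarrow> real set" where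
  "best_resp V W h i x = {a \<in> {-1, 1}. \<forall>b\<in>{-1, 1}. util V W h i (x(i := b)) \<le> util V W h i (x(i := a))}"

definition nash :: "'v set \<Rightarrow> ('v \<Rightarrow> 'v \<Rightarrow> real) \<Rightarrow> ('v \<Rightarrow> real) \<Rightarrow> ('v \<Rightarrow> real) set" where
  "nash V W h = {x \<in> profiles V. \<forall>i\<in>V. x i \<in> best_resp V W h i x}"

definition br_step :: "'v set \<Rightarrow> ('v \<Rightarrow> 'v \<Rightarrow> real) \<Rightarrow> ('v \<Rightarrow> real) \<Rightarrow> ('v \<Rightarrow> real) \<Rightarrow> ('v \<Rightarrow> real) \<Rightarrow> bool" where
  "br_step V W h x y \<longleftrightarrow> (\<exists>i\<in>V. (\<forall>k. k \<noteq> i \<longrightarrow> y k = x k)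
       \<and> y i \<in> best_resp V W h i x \<and> y i \<noteq> x i)"

definition br_path :: "'v set \<Rightarrow> ('v \<Rightarrow> 'v \<Rightarrow> real) \<Rightarrow> ('v \<Rightarrow> real) \<Rightarrow> ('v \<Rightarrow> real) list \<Rightarrow> bool" where
  "br_path V W h p \<longleftrightarrow> p \<noteq> [] \<and> (\<forall>k < length p - 1. br_step V W h (p ! k) (p ! Suc k))"

definition globally_BR_reachable :: "'v set \<Rightarrow> ('v \<Rightarrow> 'v \<Rightarrow> real) \<Rightarrow> ('v \<Rightarrow> real) \<Rightarrow> ('v \<Rightarrow> real) set \<Rightarrow> bool" where
  "globally_BR_reachable V W h S \<longleftrightarrow>
     (\<forall>x\<in>profiles V. \<exists>p. br_path V W h p \<and> hd p = x \<and> last p \<in> S)"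

end

theory Submission
  imports Defs
begin

text \<open>Because W has zero diagonal, player i's utility is x i times the local field
  h i + \<Sum>j. W i j * x j, which does not depend on x i. So the gain of switching to +1 is twice
  the local field, and the game is super-modular exactly when the local field is monotone
  in the profile, i.e. when no weight is negative.
  For reachability, first let +1 players with negative field switch to -1 until every +1 player
  is content; the number of +1 players decreases. Then let -1 players with positive field
  switch to +1: by monotonicity of the field this keeps every +1 player content, and the number
  of -1 players decreases, so the dynamics stops at a Nash equilibrium.\<close>

definition local_field :: "'v set \<Rightarrow> ('v \<Rightarrow> 'v \<Rightarrow> real) \<Rightarrow> ('v \<Rightarrow> real) \<Rightarrow> ('v \<Rightarrow> real) \<Rightarrow> 'v \<Rightarrow> real"
  where "local_field V W h x i = h i + (\<Sum>j\<in>V. W i j * x j)"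

lemma local_field_upd_self:
  assumes "W i i = 0"
  shows "local_field V W h (x(i := b)) i = local_field V W h x i"
  unfolding local_field_def using assms by (auto intro!: sum.cong)

lemma util_upd_self:
  assumes "W i i = 0"
  shows "util V W h i (x(i := b)) = b * local_field V W h x i"
proof -
  have "util V W h i (x(i := b)) = b * local_field V W h (x(i := b)) i"
    unfolding util_def local_field_def by (simp add: algebra_simps)
  with local_field_upd_self[of W i, OF assms] show ?thesis by simp
qed

lemma util_switch_gain:
  assumes "W i i = 0"
  shows "util V W h i (x(i := 1)) - util V W h i (x(i := -1)) = 2 * local_field V W h x i"
  using util_upd_self[of W i, OF assms] by simp

lemma best_resp_iff:
  assumes "W i i = 0"
  shows "a \<in> best_resp V W h i x \<longleftrightarrow> a \<in> {-1, 1} \<and> 0 \<le> a * local_field V W h x i"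
  unfolding best_resp_def util_upd_self[of W i, OF assms] by auto

lemma local_field_mono:
  assumes "unsigned V W" "i \<in> V" "\<forall>j\<in>V. x j \<le> y j"
  shows "local_field V W h x i \<le> local_field V W h y i"
  using assms unfolding local_field_def unsigned_def by (auto intro!: sum_mono mult_left_mono)

lemma local_field_raise:
  assumes "finite V" "j \<in> V" "x j = -1"
  shows "local_field V W h (x(j := 1)) i = local_field V W h x i + 2 * W i j"
proof -
  have "(\<Sum>k\<in>V. W i k * (x(j := 1)) k) = W i j + (\<Sum>k\<in>V - {j}. W i k * x k)"
    using assms by (simp add: sum.remove)
  also have "\<dots> = (\<Sum>k\<in>V. W i k * x k) + 2 * W i j"
    using assms by (simp add: sum.remove)
  finally show ?thesis unfolding local_field_def by simp
qed

lemma profiles_upd: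
  assumes "x \<in> profiles V" "i \<in> V" "b \<in> {-1, 1}"
  shows "x(i := b) \<in> profiles V"
  using assms unfolding profiles_def by auto

lemma supermodular_iff_unsigned:
  assumes "finite V" "\<forall>i\<in>V. W i i = 0"
  shows "supermodular V W h \<longleftrightarrow> unsigned V W"
proof
  assume sm: "supermodular V W h"
  show "unsigned V W"
    unfolding unsigned_def
  proof (intro ballI)
    fix i j assume ij: "i \<in> V" "j \<in> V"
    define x :: "_ \<Rightarrow> real" where "x = (\<lambda>k. if k \<in> V then -1 else 0)"
    have x: "x \<in> profiles V"
      unfolding x_def profiles_def by auto
    have "\<forall>k\<in>V. x k \<le> (x(j := 1)) k"
      by (simp add: x_def)
    with sm ij(1) x profiles_upd[OF x ij(2)]
    have "util V W h i (x(i := 1)) - util V W h i (x(i := -1))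
        \<le> util V W h i (x(j := 1, i := 1)) - util V W h i (x(j := 1, i := -1))"
      unfolding supermodular_def by blast
    then have "2 * local_field V W h x i \<le> 2 * local_field V W h (x(j := 1)) i"
      using assms(2) ij(1) by (simp add: util_switch_gain)
    then show "0 \<le> W i j"
      using local_field_raise[OF assms(1) ij(2), of x] ij(2) by (simp add: x_def)
  qed
next
  assume "unsigned V W"
  then show "supermodular V W h"
    unfolding supermodular_def using assms(2) by (simp add: util_switch_gain local_field_mono)
qed

lemma br_path_Cons:
  "br_path V W h (x # p) \<longleftrightarrow> p = [] \<or> br_step V W h x (hd p) \<and> br_path V W h p"
  unfolding br_path_def by (cases p) (simp_all add: All_less_Suc2)

lemma br_path_if_rtranclp:
  assumes "(br_step V W h)\<^sup>*\<^sup>* x y"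
  shows "\<exists>p. br_path V W h p \<and> hd p = x \<and> last p = y"
  using assms
proof (induction rule: converse_rtranclp_induct)
  case base
  show ?case by (intro exI[of _ "[y]"]) (simp add: br_path_def)
next
  case (step x z)
  then obtain p where p: "br_path V W h p" "hd p = z" "last p = y" by blast
  then have "p \<noteq> []" unfolding br_path_def by simp
  moreover have "br_path V W h (x # p)"
    using step.hyps(1) p by (simp add: br_path_Cons)
  ultimately show ?case
    using p by (intro exI[of _ "x # p"]) simp
qed

lemma reach_plus_players_content:
  assumes "finite V" "\<forall>i\<in>V. W i i = 0" "x \<in> profiles V"
  shows "\<exists>y\<in>profiles V. (br_step V W h)\<^sup>*\<^sup>* x y \<and>
           (\<forall>i\<in>V. y i = 1 \<longrightarrow> 0 \<le> local_field V W h y i)"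
  using assms(3)
proof (induction "card {i\<in>V. x i = 1}" arbitrary: x rule: less_induct)
  case less
  show ?case
  proof (cases "\<forall>i\<in>V. x i = 1 \<longrightarrow> 0 \<le> local_field V W h x i")
    case True
    with less.prems show ?thesis by blast
  next
    case False
    then obtain i where i: "i \<in> V" "x i = 1" "local_field V W h x i < 0" by force
    let ?x' = "x(i := -1)"
    have step: "br_step V W h x ?x'"
      unfolding br_step_def using i assms(2) by (auto simp: best_resp_iff)
    have fewer: "card {k\<in>V. ?x' k = 1} < card {k\<in>V. x k = 1}"
      using i assms(1) by (intro psubset_card_mono) auto
    have "?x' \<in> profiles V"
      using less.prems i(1) by (simp add: profiles_upd)
    with less.hyps[OF fewer] step show ?thesis
      by (blast intro: converse_rtranclp_into_rtranclp)
  qed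
qed

lemma reach_nash_from_plus_players_content:
  assumes "finite V" "\<forall>i\<in>V. W i i = 0" "unsigned V W" "x \<in> profiles V"
    and "\<forall>i\<in>V. x i = 1 \<longrightarrow> 0 \<le> local_field V W h x i"
  shows "\<exists>y\<in>nash V W h. (br_step V W h)\<^sup>*\<^sup>* x y"
  using assms(4,5)
proof (induction "card {i\<in>V. x i = -1}" arbitrary: x rule: less_induct)
  case less
  show ?case
  proof (cases "x \<in> nash V W h")
    case True
    then show ?thesis by blast
  next
    case False
    then obtain i where i: "i \<in> V" "x i \<notin> best_resp V W h i x"
      using less.prems(1) unfolding nash_def by auto
    with less.prems assms(2) have xi: "x i = -1" "0 < local_field V W h x i"
      unfolding profiles_def by (auto simp: best_resp_iff)
    let ?x' = "x(i := 1)"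
    have step: "br_step V W h x ?x'"
      unfolding br_step_def using i xi assms(2) by (auto simp: best_resp_iff)
    have fewer: "card {k\<in>V. ?x' k = -1} < card {k\<in>V. x k = -1}"
      using i xi assms(1) by (intro psubset_card_mono) auto
    have content: "\<forall>k\<in>V. ?x' k = 1 \<longrightarrow> 0 \<le> local_field V W h ?x' k"
    proof (intro ballI impI)
      fix k assume k: "k \<in> V" "?x' k = 1"
      show "0 \<le> local_field V W h ?x' k"
      proof (cases "k = i")
        case True
        then show ?thesis using xi local_field_upd_self[of W i] i(1) assms(2) by simp
      next
        case False
        have "\<forall>j\<in>V. x j \<le> ?x' j" using xi by simp
        then have "local_field V W h x k \<le> local_field V W h ?x' k"
          using local_field_mono[OF assms(3) k(1)] by blast
        moreover have "0 \<le> local_field V W h x k"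
          using False k less.prems(2) by simp
        ultimately show ?thesis by linarith
      qed
    qed
    have "?x' \<in> profiles V"
      using less.prems(1) i(1) by (simp add: profiles_upd)
    with less.hyps[OF fewer _ content] step show ?thesis
      by (blast intro: converse_rtranclp_into_rtranclp)
  qed
qed

theorem proposition2:
  fixes V :: "'v set" and E :: "('v \<times> 'v) set" and W :: "'v \<Rightarrow> 'v \<Rightarrow> real" and h :: "'v \<Rightarrow> real"
  assumes "network V E W"
  shows "(supermodular V W h \<longleftrightarrow> unsigned V W)
    \<and> (unsigned V W \<longrightarrow> globally_BR_reachable V W h (nash V W h))"
proof -
  have fin: "finite V" and diag: "\<forall>i\<in>V. W i i = 0"
    using assms unfolding network_def by auto
  have "globally_BR_reachable V W h (nash V W h)" if "unsigned V W"
    unfolding globally_BR_reachable_def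
  proof
    fix x assume "x \<in> profiles V"
    then obtain y where "y \<in> profiles V" "(br_step V W h)\<^sup>*\<^sup>* x y"
      and "\<forall>i\<in>V. y i = 1 \<longrightarrow> 0 \<le> local_field V W h y i"
      using reach_plus_players_content[of V W, OF fin diag] by blast
    then obtain z where "z \<in> nash V W h" "(br_step V W h)\<^sup>*\<^sup>* x z"
      using reach_nash_from_plus_players_content[of V W, OF fin diag \<open>unsigned V W\<close>]
      by (meson rtranclp_trans)
    then show "\<exists>p. br_path V W h p \<and> hd p = x \<and> last p \<in> nash V W h"
      using br_path_if_rtranclp by metis
  qed
  with supermodular_iff_unsigned[of V W, OF fin diag] show ?thesis by blast
qed

end
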